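(* Let $0<\epsilon<0.5$ and $r<1$. Let $\gamma_k=\frac{\gamma_0}{(k+1)^{0.5+0.5\epsilon}}$ and $\lambda_k=\frac{\lambda_0}{(k+1)^{0.5-\epsilon}}$ for $k\ge0$, with $\gamma_0,\lambda_0>0$ and $\gamma_0\lambda_0\mu_h\le 2m$. Let $\{\bar x_N\}$ be generated by the IR-IG method with these sequences and averaging parameter $r$. Then (a) $\bar x_N\to x_h^*$ as $N\to\infty$; (b) $f(\bar x_N)-f^*=\mathcal{O}\big(1/N^{0.5-\epsilon}\big)$.
   Context: Standing setup: $X\subset\mathbb{R}^n$ is nonempty, compact and convex. $f_1,\dots,f_m:\mathbb{R}^n\to\mathbb{R}$ are convex (possibly nondifferentiable) functions and $f=\sum_{i=1}^m f_i$. $h:\mathbb{R}^n\to\mathbb{R}$ is strongly convex with parameter $\mu_h>0$ (possibly nondifferentiable). Let $f^*=\min_{x\in X}f(x)$, $X^*=\arg\min_{x\in X}f(x)$, and let $x_h^*$ be the unique minimizer of $h$ over $X^*$. $\mathcal{P}_X$ denotes Euclidean projection onto $X$. IR-IG method: given $x_0\in X$, positive sequences $\{\gamma_k\}$, $\{\lambda_k\}$ and a constant $r<1$, for each $k\ge0$ set $x_{k,0}=x_k$; for $i=0,\dots,m-1$ pick any $g_{f_{i+1}}(x_{k,i})\in\partial f_{i+1}(x_{k,i})$ and $g_h(x_{k,i})\in\partial h(x_{k,i})$ and set $x_{k,i+1}=\mathcal{P}_X\big(x_{k,i}-\gamma_k\big(g_{f_{i+1}}(x_{k,i})+\tfrac{\lambda_k}{m}g_h(x_{k,i})\big)\big)$;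 then set $x_{k+1}=x_{k,m}$. The averaged iterates are $\bar x_N=\sum_{k=0}^{N-1}\gamma_k^r x_k\big/\sum_{k=0}^{N-1}\gamma_k^r$ for $N\ge1$. *)

theory Defs
  imports "HOL-Analysis.Analysis" "HOL-Library.Landau_Symbols"
begin

definition subdiff :: "('a::real_inner \<Rightarrow> real) \<Rightarrow> 'a \<Rightarrow> 'a set" where
  "subdiff g x = {v. \<forall>y. g y \<ge> g x + inner v (y - x)}"

definition strongly_convex :: "('a::real_normed_vector \<Rightarrow> real) \<Rightarrow> real \<Rightarrow> bool" where
  "strongly_convex g mu \<longleftrightarrow>
     (\<forall>x y t. 0 \<le> t \<and> t \<le> 1 \<longrightarrow>
        g (t *\<^sub>R x + (1 - t) *\<^sub>R y) \<le> t * g x + (1 - t) * g y - mu / 2 * t * (1 - t) * (norm (x - y))\<^sup>2)"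

end

theory Submission
  imports Defs
begin

text \<open>One cycle of IR-IG acts, up to an error of order gamma_k^2, like a projected subgradient step
  for f + lambda_k h taken at the first iterate of the cycle: for every y in X,
  |x_(k+1) - y|^2 \<le> |x_k - y|^2 - 2 gamma_k (f x_k - f y) - 2 gamma_k lambda_k (h x_k - h y) + C gamma_k^2.
  Multiplying by gamma_k^r / (2 gamma_k), resp. gamma_k^r / (2 gamma_k lambda_k), both nondecreasing,
  telescoping against the bounded distances and applying Jensen's inequality to the weighted
  averages gives f(xbar_N) - f* = O(N^-(1/2 - eps)) (using that h is bounded on X) and
  h(xbar_N) - h(x_h*) = O(N^-rho) for some rho > 0 (using f(x_k) \<ge> f*). By strong convexity x_h* is
  the only point of the compact set X at which neither excess is positive, so xbar_N converges to it.\<close>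

section \<open>Power sums\<close>

lemma powr_succ_diff_bounds:
  fixes e :: real
  assumes e: "e > 0"
  shows "e \<le> 1 \<Longrightarrow> e * (real k + 1) powr (e - 1) \<le> (real k + 1) powr e - real k powr e"
    and "1 \<le> e \<Longrightarrow> (real k + 1) powr e - real k powr e \<le> e * (real k + 1) powr (e - 1)"
proof -
  consider "k = 0" | z where "real k < z" "z < real k + 1"
    "(real k + 1) powr e - real k powr e = e * z powr (e - 1)"
  proof (cases "k = 0")
    case False
    have "\<And>z. real k \<le> z \<Longrightarrow> z \<le> real k + 1 \<Longrightarrow>
        ((\<lambda>z. z powr e) has_real_derivative e * z powr (e - 1)) (at z)"
      using False by (intro has_real_derivative_powr) auto
    from MVT2[of "real k" "real k + 1", OF _ this] show ?thesis
      using that(2) by auto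
  qed
  then have "(e \<le> 1 \<longrightarrow> e * (real k + 1) powr (e - 1) \<le> (real k + 1) powr e - real k powr e) \<and>
    (1 \<le> e \<longrightarrow> (real k + 1) powr e - real k powr e \<le> e * (real k + 1) powr (e - 1))"
  proof cases
    case 1
    then show ?thesis using e by simp
  next
    case (2 z)
    then have "z > 0" by (smt (verit) of_nat_0_le_iff)
    then show ?thesis
      using 2 e powr_mono2'[of "e - 1" z "real k + 1"] powr_mono2[of "e - 1" z "real k + 1"] by auto
  qed
  then show "e \<le> 1 \<Longrightarrow> e * (real k + 1) powr (e - 1) \<le> (real k + 1) powr e - real k powr e"
    and "1 \<le> e \<Longrightarrow> (real k + 1) powr e - real k powr e \<le> e * (real k + 1) powr (e - 1)"
    by auto
qed

lemma sum_powr_bounds: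
  fixes e :: real
  assumes e: "e > 0" and N: "N \<ge> 1"
  shows "min 1 (1 / e) * real N powr e \<le> (\<Sum>k<N. (real k + 1) powr (e - 1))"
    and "(\<Sum>k<N. (real k + 1) powr (e - 1)) \<le> max 1 (1 / e) * real N powr e"
proof -
  have sum_const: "(\<Sum>k<N. real N powr (e - 1)) = real N powr e"
    using N by (simp add: powr_diff)
  have telescope: "(\<Sum>k<N. (real k + 1) powr e - real k powr e) = real N powr e"
    using sum_lessThan_telescope[of "\<lambda>k. real k powr e" N] by (simp add: add.commute)
  have "real N powr e \<le> (\<Sum>k<N. (real k + 1) powr (e - 1))" if "e \<le> 1"
    unfolding sum_const[symmetric] using that by (intro sum_mono powr_mono2') auto
  moreover have "real N powr e \<le> e * (\<Sum>k<N. (real k + 1) powr (e - 1))" if "1 \<le> e"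
    unfolding telescope[symmetric] sum_distrib_left
    using powr_succ_diff_bounds(2)[OF e that] by (intro sum_mono) auto
  ultimately show "min 1 (1 / e) * real N powr e \<le> (\<Sum>k<N. (real k + 1) powr (e - 1))"
    using e by (cases "e \<le> 1") (auto simp: min_def field_simps)
  have "(\<Sum>k<N. (real k + 1) powr (e - 1)) \<le> real N powr e" if "1 \<le> e"
    unfolding sum_const[symmetric] using that by (intro sum_mono powr_mono2) auto
  moreover have "e * (\<Sum>k<N. (real k + 1) powr (e - 1)) \<le> real N powr e" if "e \<le> 1"
    unfolding telescope[symmetric] sum_distrib_left
    using powr_succ_diff_bounds(1)[OF e that] by (intro sum_mono) auto
  ultimately show "(\<Sum>k<N. (real k + 1) powr (e - 1)) \<le> max 1 (1 / e) * real N powr e"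
    using e by (cases "e \<le> 1") (auto simp: max_def field_simps)
qed

lemma sum_mult_telescope_le:
  fixes c E :: "nat \<Rightarrow> real"
  assumes "incseq c" "\<And>k. 0 \<le> c k" "\<And>k. 0 \<le> E k" "\<And>k. E k \<le> R"
  shows "(\<Sum>k<N. c k * (E k - E (Suc k))) \<le> c N * R"
proof -
  have "(\<Sum>k<N. c k * (E k - E (Suc k))) + c N * E N \<le> c N * R"
  proof (induction N)
    case 0
    then show ?case using assms(2,4) by (simp add: mult_left_mono)
  next
    case (Suc N)
    have "(c (Suc N) - c N) * E (Suc N) \<le> (c (Suc N) - c N) * R"
      using assms(1,4) by (intro mult_left_mono) (auto simp: incseq_Suc_iff)
    then show ?case using Suc by (simp add: algebra_simps)
  qed
  moreover have "0 \<le> c N * E N" using assms(2,3) by simp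
  ultimately show ?thesis by linarith
qed

lemma sum_telescope_powr_le:
  fixes v E :: "nat \<Rightarrow> real"
  assumes pos: "s > 0" "\<alpha> \<ge> 0" "\<beta> \<ge> 0" "p \<ge> 0"
    and step: "\<And>k. v k \<le> \<alpha> * (real k + 1) powr p * (E k - E (Suc k)) + \<beta> * (real k + 1) powr (s - 1)"
    and E: "\<And>k. 0 \<le> E k" "\<And>k. E k \<le> R"
    and exps: "p - e \<le> -q" "s - e \<le> -q" and N: "N \<ge> 1"
  shows "(\<Sum>k<N. v k) \<le> (\<alpha> * 2 powr p * R + \<beta> * max 1 (1 / s)) * (real N powr e * real N powr -q)"
proof -
  define n where "n = real N"
  have n: "n \<ge> 1" using N by (simp add: n_def)
  have R: "R \<ge> 0" using E[of 0] by linarith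
  have powr_le: "n powr c \<le> n powr e * n powr -q" if "c - e \<le> -q" for c
    using that n by (simp add: powr_add[symmetric] powr_mono)
  have "(n + 1) powr p \<le> (2 * n) powr p" using n pos by (intro powr_mono2) auto
  then have succ_le: "(n + 1) powr p \<le> 2 powr p * (n powr e * n powr -q)"
    using powr_le[OF exps(1)] by (simp add: powr_mult order_trans)
  have "(\<Sum>k<N. v k) \<le> (\<Sum>k<N. \<alpha> * (real k + 1) powr p * (E k - E (Suc k)))
      + \<beta> * (\<Sum>k<N. (real k + 1) powr (s - 1))"
    using step by (simp add: sum.distrib[symmetric] sum_distrib_left sum_mono)
  also have "(\<Sum>k<N. \<alpha> * (real k + 1) powr p * (E k - E (Suc k))) \<le> \<alpha> * (n + 1) powr p * R"
    unfolding n_def using pos E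
    by (intro sum_mult_telescope_le) (auto simp: incseq_Suc_iff intro!: mult_left_mono powr_mono2)
  also have "\<alpha> * (n + 1) powr p * R \<le> \<alpha> * (2 powr p * (n powr e * n powr -q)) * R"
    using succ_le pos R by (intro mult_right_mono mult_left_mono) auto
  also have "\<beta> * (\<Sum>k<N. (real k + 1) powr (s - 1)) \<le> \<beta> * (max 1 (1 / s) * (n powr e * n powr -q))"
  proof (intro mult_left_mono)
    have "max 1 (1 / s) * n powr s \<le> max 1 (1 / s) * (n powr e * n powr -q)"
      using powr_le[OF exps(2)] by (intro mult_left_mono) auto
    then show "(\<Sum>k<N. (real k + 1) powr (s - 1)) \<le> max 1 (1 / s) * (n powr e * n powr -q)"
      using sum_powr_bounds(2)[OF pos(1) N] by (simp add: n_def)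
  qed (use pos in auto)
  finally show ?thesis by (simp add: n_def algebra_simps)
qed

lemma weighted_average_powr_rate:
  fixes w u E :: "nat \<Rightarrow> real"
  assumes w: "\<And>k. w k = \<omega> * (real k + 1) powr (e - 1)"
    and pos: "\<omega> > 0" "e > 0" "s > 0" "\<alpha> \<ge> 0" "\<beta> \<ge> 0" "p \<ge> 0"
    and step: "\<And>k. w k * u k \<le> \<alpha> * (real k + 1) powr p * (E k - E (Suc k)) + \<beta> * (real k + 1) powr (s - 1)"
    and E: "\<And>k. 0 \<le> E k" "\<And>k. E k \<le> R"
    and exps: "p - e \<le> -q" "s - e \<le> -q"
  shows "\<exists>K. \<forall>N\<ge>1. (\<Sum>k<N. w k * u k) / (\<Sum>k<N. w k) \<le> K * real N powr -q"
proof (intro exI allI impI)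
  fix N :: nat
  assume N: "N \<ge> 1"
  define A where "A = \<alpha> * 2 powr p * R + \<beta> * max 1 (1 / s)"
  have "0 \<le> A" using pos E[of 0] E(2)[of 0] by (simp add: A_def)
  have den: "\<omega> * min 1 (1 / e) * real N powr e \<le> (\<Sum>k<N. w k)"
    using sum_powr_bounds(1)[OF pos(2) N] pos unfolding w sum_distrib_left[symmetric]
    by (simp add: mult.assoc)
  have "0 < \<omega> * min 1 (1 / e) * real N powr e" using pos N by simp
  then have "(\<Sum>k<N. w k * u k) / (\<Sum>k<N. w k)
      \<le> A * (real N powr e * real N powr -q) / (\<omega> * min 1 (1 / e) * real N powr e)"
    using sum_telescope_powr_le[OF pos(3-6) step E exps N] den \<open>0 \<le> A\<close> unfolding A_def
    by (intro frac_le) auto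
  also have "\<dots> = A / (\<omega> * min 1 (1 / e)) * real N powr -q"
    using N by (simp add: mult.commute[of \<omega>] mult.assoc)
  finally show "(\<Sum>k<N. w k * u k) / (\<Sum>k<N. w k) \<le> A / (\<omega> * min 1 (1 / e)) * real N powr -q" .
qed

lemma eventually_mult_powr_less:
  fixes q \<delta> :: real
  assumes "q > 0" "\<delta> > 0"
  shows "eventually (\<lambda>N. K * real N powr -q < \<delta>) sequentially"
proof -
  have "(\<lambda>N. K * real N powr -q) \<longlonglongrightarrow> K * 0"
    using assms(1) by (intro tendsto_mult tendsto_const tendsto_neg_powr filterlim_real_sequentially) auto
  then show ?thesis using assms(2) by (simp add: order_tendstoD(2))
qed

section \<open>Convex functions and subgradients\<close>

lemma strongly_convexD:
  assumes "strongly_convex g mu" "0 \<le> t" "t \<le> 1"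
  shows "g (t *\<^sub>R x + (1 - t) *\<^sub>R y) \<le> t * g x + (1 - t) * g y - mu / 2 * t * (1 - t) * (norm (x - y))\<^sup>2"
  using assms unfolding strongly_convex_def by blast

lemma strongly_convex_imp_convex_on:
  assumes "strongly_convex g mu" "0 \<le> mu"
  shows "convex_on UNIV g"
proof (rule convex_onI)
  fix t :: real and x y
  assume "0 < t" "t < 1"
  then have "g ((1 - t) *\<^sub>R x + (1 - (1 - t)) *\<^sub>R y)
      \<le> (1 - t) * g x + (1 - (1 - t)) * g y - mu / 2 * (1 - t) * (1 - (1 - t)) * (norm (x - y))\<^sup>2"
    by (intro strongly_convexD[OF assms(1)]) auto
  moreover have "0 \<le> mu / 2 * (1 - t) * (1 - (1 - t)) * (norm (x - y))\<^sup>2"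
    using \<open>t < 1\<close> \<open>0 < t\<close> assms(2) by simp
  ultimately show "g ((1 - t) *\<^sub>R x + t *\<^sub>R y) \<le> (1 - t) * g x + t * g y" by simp
qed simp

lemma convex_on_sum_fun:
  assumes "finite I" "convex S" "\<And>i. i \<in> I \<Longrightarrow> convex_on S (g i)"
  shows "convex_on S (\<lambda>y. \<Sum>i\<in>I. g i y)"
  using assms by (induction I rule: finite_induct) (auto simp: convex_on_const)

lemma weighted_mean_eq_convex_combination:
  fixes w :: "'i \<Rightarrow> real" and y :: "'i \<Rightarrow> 'a::real_vector"
  shows "(\<Sum>i\<in>I. w i *\<^sub>R y i) /\<^sub>R (\<Sum>i\<in>I. w i) = (\<Sum>i\<in>I. (w i / (\<Sum>j\<in>I. w j)) *\<^sub>R y i)"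
  by (simp add: scaleR_sum_right divide_inverse_commute)

lemma sum_normalized_weights:
  fixes w :: "'i \<Rightarrow> real"
  assumes "finite I" "I \<noteq> {}" "\<And>i. i \<in> I \<Longrightarrow> w i > 0"
  shows "(\<Sum>i\<in>I. w i / (\<Sum>j\<in>I. w j)) = 1" and "(\<Sum>j\<in>I. w j) > 0"
proof -
  show pos: "(\<Sum>j\<in>I. w j) > 0" using assms by (intro sum_pos) auto
  then show "(\<Sum>i\<in>I. w i / (\<Sum>j\<in>I. w j)) = 1" by (simp add: sum_divide_distrib[symmetric])
qed

lemma convex_weighted_mean_mem:
  assumes "convex C" "finite I" "I \<noteq> {}" "\<And>i. i \<in> I \<Longrightarrow> w i > 0" "\<And>i. i \<in> I \<Longrightarrow> y i \<in> C"
  shows "(\<Sum>i\<in>I. w i *\<^sub>R y i) /\<^sub>R (\<Sum>i\<in>I. w i) \<in> C"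
  unfolding weighted_mean_eq_convex_combination
  using sum_normalized_weights[OF assms(2-4)] assms by (intro convex_sum) (auto intro: less_imp_le)

lemma convex_on_weighted_mean_le:
  assumes "convex_on C g" "finite I" "I \<noteq> {}" "\<And>i. i \<in> I \<Longrightarrow> w i > 0" "\<And>i. i \<in> I \<Longrightarrow> y i \<in> C"
  shows "g ((\<Sum>i\<in>I. w i *\<^sub>R y i) /\<^sub>R (\<Sum>i\<in>I. w i)) \<le> (\<Sum>i\<in>I. w i * g (y i)) / (\<Sum>i\<in>I. w i)"
proof -
  have "g ((\<Sum>i\<in>I. w i *\<^sub>R y i) /\<^sub>R (\<Sum>i\<in>I. w i)) \<le> (\<Sum>i\<in>I. w i / (\<Sum>j\<in>I. w j) * g (y i))"
    unfolding weighted_mean_eq_convex_combination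
    using sum_normalized_weights[OF assms(2-4)] assms by (intro convex_on_sum) (auto intro: less_imp_le)
  then show ?thesis by (simp add: sum_divide_distrib)
qed

lemma subdiff_diff_le_inner:
  assumes "v \<in> subdiff g x"
  shows "g x - g y \<le> inner v (x - y)"
proof -
  have "g y \<ge> g x + inner v (y - x)" using assms unfolding subdiff_def by blast
  then show ?thesis by (simp add: inner_diff_right)
qed

lemma subdiff_norm_le:
  fixes g :: "'a::real_inner \<Rightarrow> real"
  assumes v: "v \<in> subdiff g x" and M: "\<And>z. z \<in> cball x 1 \<Longrightarrow> \<bar>g z\<bar> \<le> M"
  shows "norm v \<le> 2 * M"
proof (cases "v = 0")
  case True
  then show ?thesis using M[of x] by simp
next
  case False
  let ?y = "x + (1 / norm v) *\<^sub>R v"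
  have "?y \<in> cball x 1" using False by (simp add: dist_norm)
  have "g ?y \<ge> g x + inner v (?y - x)" using v unfolding subdiff_def by blast
  moreover have "inner v (?y - x) = norm v"
    using False by (simp add: dot_square_norm power2_eq_square)
  ultimately show ?thesis using M[of x] M[OF \<open>?y \<in> cball x 1\<close>] by simp
qed

lemma convex_on_diff_le:
  fixes g :: "'a::real_normed_vector \<Rightarrow> real"
  assumes g: "convex_on UNIV g"
    and M: "\<And>z. norm z \<le> B + 1 \<Longrightarrow> \<bar>g z\<bar> \<le> M"
    and u: "norm u \<le> B" and v: "norm v \<le> B"
  shows "g v - g u \<le> 2 * M * norm (v - u)"
proof (cases "u = v")
  case False
  define d where "d = norm (v - u)"
  have d: "d > 0" using False by (simp add: d_def)
  \<comment> \<open>v lies on the segment from u to the point w at distance 1 beyond v\<close>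
  define w where "w = v + (1 / d) *\<^sub>R (v - u)"
  define t where "t = d / (1 + d)"
  have "norm w \<le> norm v + norm ((1 / d) *\<^sub>R (v - u))"
    unfolding w_def by (rule norm_triangle_ineq)
  also have "norm ((1 / d) *\<^sub>R (v - u)) = 1" using d by (simp add: d_def)
  finally have w: "norm w \<le> B + 1" using v by simp
  have t: "0 \<le> t" "t \<le> 1" "t \<le> d" using d by (auto simp: t_def field_simps)
  have "(1 - t) *\<^sub>R u + t *\<^sub>R w = v"
    using d by (simp add: t_def w_def field_simps scaleR_add_right flip: scaleR_add_left)
  then have "g v \<le> (1 - t) * g u + t * g w"
    using convex_onD[OF g t(1,2)] by (metis UNIV_I)
  then have "g v - g u \<le> t * (g w - g u)" by (simp add: algebra_simps)
  also have "\<dots> \<le> t * (2 * M)"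
    using M[OF w] M[of u] u t by (intro mult_left_mono) auto
  also have "\<dots> \<le> d * (2 * M)"
    using M[of v] v t by (intro mult_right_mono) auto
  finally show ?thesis by (simp add: d_def mult.commute)
qed simp

lemma convex_on_abs_bounded:
  fixes g :: "'a::euclidean_space \<Rightarrow> real"
  assumes "convex_on UNIV g" "bounded S"
  shows "\<exists>M. \<forall>z\<in>S. \<bar>g z\<bar> \<le> M"
proof -
  obtain c R where S: "S \<subseteq> cball c R"
    using assms(2) by (meson bounded_subset_cball)
  have "continuous_on (cball c R) g"
    using convex_on_continuous[OF open_UNIV assms(1)] by (rule continuous_on_subset) simp
  then have "bounded (g ` cball c R)"
    by (intro compact_imp_bounded compact_continuous_image compact_cball)
  then obtain M where "\<forall>y\<in>g ` cball c R. \<bar>y\<bar> \<le> M"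
    unfolding bounded_real by blast
  then show ?thesis using S by blast
qed

lemma convex_on_subdiff_bounded:
  fixes g :: "'a::euclidean_space \<Rightarrow> real"
  assumes "convex_on UNIV g" "bounded S"
  shows "\<exists>G. \<forall>z\<in>S. \<forall>v\<in>subdiff g z. norm v \<le> G"
proof -
  obtain B where B: "\<And>z. z \<in> S \<Longrightarrow> norm z \<le> B" using assms(2) unfolding bounded_iff by blast
  obtain M where M: "\<And>z. z \<in> cball 0 (B + 1) \<Longrightarrow> \<bar>g z\<bar> \<le> M"
    using convex_on_abs_bounded[OF assms(1) bounded_cball] by blast
  have "norm v \<le> 2 * M" if "z \<in> S" "v \<in> subdiff g z" for z v
  proof (rule subdiff_norm_le[OF that(2)])
    fix y assume "y \<in> cball z 1"
    then have "norm y \<le> B + 1"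
      using B[OF that(1)] norm_triangle_sub[of y z] by (simp add: dist_norm norm_minus_commute)
    then show "\<bar>g y\<bar> \<le> M" using M by simp
  qed
  then show ?thesis by blast
qed

lemma convex_on_lipschitz_on_bounded:
  fixes g :: "'a::euclidean_space \<Rightarrow> real"
  assumes "convex_on UNIV g" "bounded S"
  shows "\<exists>L. L-lipschitz_on S g"
proof -
  obtain B where B: "B > 0" "\<And>z. z \<in> S \<Longrightarrow> norm z \<le> B" using assms(2) unfolding bounded_pos by blast
  obtain M where M: "\<And>z. z \<in> cball 0 (B + 1) \<Longrightarrow> \<bar>g z\<bar> \<le> M"
    using convex_on_abs_bounded[OF assms(1) bounded_cball] by blast
  have diff_le: "g v - g u \<le> 2 * M * norm (v - u)" if "u \<in> S" "v \<in> S" for u v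
    using M B(2)[OF that(1)] B(2)[OF that(2)] by (intro convex_on_diff_le[OF assms(1)]) auto
  have "dist (g u) (g v) \<le> 2 * M * dist u v" if "u \<in> S" "v \<in> S" for u v
    using diff_le[OF that] diff_le[OF that(2,1)]
    by (simp add: dist_real_def dist_norm abs_le_iff norm_minus_commute)
  moreover have "0 \<le> M" using M[of 0] B(1) by simp
  ultimately show ?thesis by (intro exI[of _ "2 * M"] lipschitz_onI) auto
qed

lemma family_subdiff_bounded:
  fixes g :: "'i \<Rightarrow> 'a::euclidean_space \<Rightarrow> real"
  assumes "finite I" "\<And>i. i \<in> I \<Longrightarrow> convex_on UNIV (g i)" "bounded S"
  shows "\<exists>G. \<forall>i\<in>I. \<forall>z\<in>S. \<forall>v\<in>subdiff (g i) z. norm v \<le> G"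
proof -
  obtain G where G: "\<forall>i\<in>I. \<forall>z\<in>S. \<forall>v\<in>subdiff (g i) z. norm v \<le> G i"
    using convex_on_subdiff_bounded[OF assms(2) assms(3)] by metis
  have "norm v \<le> (\<Sum>j\<in>I. \<bar>G j\<bar>)" if "i \<in> I" "z \<in> S" "v \<in> subdiff (g i) z" for i z v
  proof -
    have "G i \<le> (\<Sum>j\<in>I. \<bar>G j\<bar>)"
      using member_le_sum[OF that(1), of "\<lambda>j. \<bar>G j\<bar>"] assms(1) by simp
    then show ?thesis using G that by fastforce
  qed
  then show ?thesis by blast
qed

lemma family_lipschitz_on_bounded:
  fixes g :: "'i \<Rightarrow> 'a::euclidean_space \<Rightarrow> real"
  assumes "finite I" "\<And>i. i \<in> I \<Longrightarrow> convex_on UNIV (g i)" "bounded S"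
  shows "\<exists>L. \<forall>i\<in>I. L-lipschitz_on S (g i)"
proof -
  obtain L where L: "\<forall>i\<in>I. lipschitz_on (L i) S (g i)"
    using convex_on_lipschitz_on_bounded[OF assms(2) assms(3)] by metis
  have "lipschitz_on (\<Sum>j\<in>I. L j) S (g i)" if "i \<in> I" for i
  proof (rule lipschitz_on_mono[OF L[rule_format, OF that] order_refl])
    show "L i \<le> (\<Sum>j\<in>I. L j)"
      using L assms(1) that by (intro member_le_sum) (auto intro: lipschitz_on_nonneg)
  qed
  then show ?thesis by blast
qed

lemma closest_point_subgradient_step:
  fixes X :: "'a::euclidean_space set"
  assumes "convex X" "closed X" "X \<noteq> {}" "y \<in> X" "c \<le> inner v (z - y)" "0 \<le> \<gamma>"
  shows "(norm (closest_point X (z - \<gamma> *\<^sub>R v) - y))\<^sup>2 \<le> (norm (z - y))\<^sup>2 - 2 * \<gamma> * c + \<gamma>\<^sup>2 * (norm v)\<^sup>2"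
proof -
  have expand: "(norm (a - \<gamma> *\<^sub>R v))\<^sup>2 = (norm a)\<^sup>2 - 2 * \<gamma> * inner v a + \<gamma>\<^sup>2 * (norm v)\<^sup>2" for a
    unfolding power2_norm_eq_inner by (simp add: inner_simps inner_commute algebra_simps power2_eq_square)
  have "norm (closest_point X (z - \<gamma> *\<^sub>R v) - y) \<le> norm ((z - y) - \<gamma> *\<^sub>R v)"
    using closest_point_lipschitz[OF assms(1-3), of "z - \<gamma> *\<^sub>R v" y] closest_point_self[OF assms(4)]
    by (simp add: dist_norm algebra_simps)
  then have "(norm (closest_point X (z - \<gamma> *\<^sub>R v) - y))\<^sup>2 \<le> (norm ((z - y) - \<gamma> *\<^sub>R v))\<^sup>2"
    by (simp add: power_mono)
  also have "\<dots> = (norm (z - y))\<^sup>2 - 2 * \<gamma> * inner v (z - y) + \<gamma>\<^sup>2 * (norm v)\<^sup>2"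
    by (rule expand)
  also have "\<dots> \<le> (norm (z - y))\<^sup>2 - 2 * \<gamma> * c + \<gamma>\<^sup>2 * (norm v)\<^sup>2"
    using mult_left_mono[OF assms(5), of "2 * \<gamma>"] assms(6) by linarith
  finally show ?thesis .
qed

section \<open>Bilevel minimizers\<close>

definition bilevel_minimizer :: "'a set \<Rightarrow> ('a \<Rightarrow> real) \<Rightarrow> ('a \<Rightarrow> real) \<Rightarrow> 'a \<Rightarrow> bool" where
  "bilevel_minimizer X f h z \<longleftrightarrow>
     z \<in> X \<and> (\<forall>y\<in>X. f z \<le> f y) \<and> (\<forall>y\<in>X. f y \<le> f z \<longrightarrow> h z \<le> h y)"

lemma bilevel_minimizer_unique:
  assumes "convex_on X f" "strongly_convex h mu" "mu > 0" "bilevel_minimizer X f h xh"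
    and z: "z \<in> X" "f z \<le> f xh" "h z \<le> h xh"
  shows "z = xh"
proof -
  have xh: "xh \<in> X" "\<And>y. y \<in> X \<Longrightarrow> f y \<le> f xh \<Longrightarrow> h xh \<le> h y"
    using assms(4) unfolding bilevel_minimizer_def by auto
  define mid where "mid = (1 / 2 :: real) *\<^sub>R z + (1 - 1 / 2) *\<^sub>R xh"
  have "convex X" using assms(1) by (simp add: convex_on_def)
  then have "mid \<in> X" unfolding mid_def using z xh by (intro convexD) auto
  moreover have "f mid \<le> f xh"
    using convex_onD[OF assms(1), of "1 / 2" z xh] z xh by (simp add: mid_def algebra_simps)
  ultimately have "h xh \<le> h mid" by (rule xh(2))
  also have "h mid \<le> h xh - mu / 8 * (norm (z - xh))\<^sup>2"
    using strongly_convexD[OF assms(2), of "1 / 2" z xh] z by (simp add: mid_def)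
  finally have "mu * (norm (z - xh))\<^sup>2 \<le> 0" by simp
  then show ?thesis using assms(3) by (simp add: mult_le_0_iff)
qed

lemma bilevel_minimizer_approx_near:
  assumes X: "compact X" and f: "convex_on X f" "continuous_on X f"
    and h: "strongly_convex h mu" "mu > 0" "continuous_on X h"
    and xh: "bilevel_minimizer X f h xh" and e: "e > 0"
  shows "\<exists>\<delta>>0. \<forall>z\<in>X. f z \<le> f xh + \<delta> \<longrightarrow> h z \<le> h xh + \<delta> \<longrightarrow> dist z xh < e"
proof -
  define K where "K = X - ball xh e"
  have "compact K" unfolding K_def using X by (simp add: compact_diff)
  show ?thesis
  proof (cases "K = {}")
    case True
    then show ?thesis unfolding K_def by (intro exI[of _ 1]) (auto simp: dist_commute)
  next
    case False
    define excess where "excess z = max (f z - f xh) (h z - h xh)" for z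
    have "continuous_on K excess" unfolding excess_def K_def
      by (intro continuous_intros continuous_on_subset[OF f(2)] continuous_on_subset[OF h(3)]) auto
    then obtain z0 where z0: "z0 \<in> K" "\<And>y. y \<in> K \<Longrightarrow> excess z0 \<le> excess y"
      using continuous_attains_inf[OF \<open>compact K\<close> False] by blast
    have "excess z0 > 0"
    proof (rule ccontr)
      assume "\<not> excess z0 > 0"
      then have "z0 = xh"
        using z0(1) by (intro bilevel_minimizer_unique[OF f(1) h(1,2) xh]) (auto simp: excess_def K_def)
      then show False using z0(1) e by (simp add: K_def)
    qed
    moreover have "dist z xh < e"
      if "z \<in> X" "f z \<le> f xh + excess z0 / 2" "h z \<le> h xh + excess z0 / 2" for z
    proof (rule ccontr)
      assume "\<not> dist z xh < e"
      then have "excess z0 \<le> excess z" using that(1) by (intro z0(2)) (simp add: K_def dist_commute)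
      moreover have "excess z \<le> excess z0 / 2"
        using that(2,3) unfolding excess_def[of z] max.bounded_iff by linarith
      ultimately show False using \<open>excess z0 > 0\<close> by simp
    qed
    ultimately show ?thesis by (intro exI[of _ "excess z0 / 2"]) auto
  qed
qed

lemma tendsto_bilevel_minimizer:
  assumes X: "compact X" and f: "convex_on X f" "continuous_on X f"
    and h: "strongly_convex h mu" "mu > 0" "continuous_on X h"
    and xh: "bilevel_minimizer X f h xh"
    and in_X: "eventually (\<lambda>n. z n \<in> X) F"
    and approx: "\<And>\<delta>. \<delta> > 0 \<Longrightarrow> eventually (\<lambda>n. f (z n) \<le> f xh + \<delta> \<and> h (z n) \<le> h xh + \<delta>) F"
  shows "(z \<longlongrightarrow> xh) F"
proof (rule tendstoI)
  fix e :: real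
  assume "e > 0"
  then obtain \<delta> where \<delta>: "\<delta> > 0" "\<forall>y\<in>X. f y \<le> f xh + \<delta> \<longrightarrow> h y \<le> h xh + \<delta> \<longrightarrow> dist y xh < e"
    using bilevel_minimizer_approx_near[OF X f h xh] by blast
  show "eventually (\<lambda>n. dist (z n) xh < e) F"
    using in_X approx[OF \<delta>(1)] by eventually_elim (use \<delta>(2) in auto)
qed

lemma bilevel_minimizer_INF:
  fixes f h :: "'a::topological_space \<Rightarrow> real"
  assumes "compact X" "continuous_on X f"
    and "xh \<in> {y \<in> X. f y = (INF z\<in>X. f z)}"
    and "\<And>y. y \<in> {y \<in> X. f y = (INF z\<in>X. f z)} \<Longrightarrow> h xh \<le> h y"
  shows "bilevel_minimizer X f h xh"
proof -
  have "bdd_below (f ` X)"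
    using assms(1,2) by (intro bounded_imp_bdd_below compact_imp_bounded compact_continuous_image)
  then have "(INF z\<in>X. f z) \<le> f y" if "y \<in> X" for y using that by (rule cINF_lower)
  then show ?thesis
    using assms(3,4) unfolding bilevel_minimizer_def by (metis (mono_tags, lifting) mem_Collect_eq order_antisym)
qed

section \<open>The IR-IG iteration\<close>

locale ir_ig =
  fixes X :: "'a::euclidean_space set"
    and fs :: "nat \<Rightarrow> 'a \<Rightarrow> real" and h :: "'a \<Rightarrow> real" and m :: nat
    and gamma lambda :: "nat \<Rightarrow> real"
    and x gf gh :: "nat \<Rightarrow> nat \<Rightarrow> 'a"
  assumes X: "X \<noteq> {}" "compact X" "convex X"
    and m_pos: "m \<ge> 1"
    and fs_convex: "\<And>i. i < m \<Longrightarrow> convex_on UNIV (fs i)"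
    and h_convex: "convex_on UNIV h"
    and gamma_pos: "\<And>k. gamma k > 0"
    and lambda_pos: "\<And>k. lambda k > 0"
    and lambda_bounded: "bdd_above (range lambda)"
    and start: "x 0 0 \<in> X"
    and gf: "\<And>k i. i < m \<Longrightarrow> gf k i \<in> subdiff (fs i) (x k i)"
    and gh: "\<And>k i. i < m \<Longrightarrow> gh k i \<in> subdiff h (x k i)"
    and inner_step: "\<And>k i. i < m \<Longrightarrow>
        x k (Suc i) = closest_point X (x k i - gamma k *\<^sub>R (gf k i + (lambda k / real m) *\<^sub>R gh k i))"
    and outer_step: "\<And>k. x (Suc k) 0 = x k m"
begin

definition obj :: "'a \<Rightarrow> real" where
  "obj y = (\<Sum>i<m. fs i y)"

definition dir :: "nat \<Rightarrow> nat \<Rightarrow> 'a" where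
  "dir k i = gf k i + (lambda k / real m) *\<^sub>R gh k i"

lemma X_closed: "closed X"
  using X(2) by (rule compact_imp_closed)

lemma obj_convex: "convex_on UNIV obj"
  unfolding obj_def[abs_def] using fs_convex by (intro convex_on_sum_fun) auto

lemma iterate_in_set:
  assumes "i \<le> m"
  shows "x k i \<in> X"
proof -
  have "x k (Suc j) \<in> X" if "j < m" for k j
    using inner_step[OF that] closest_point_in_set[OF X_closed X(1)] by simp
  moreover have "x k 0 \<in> X"
  proof (cases k)
    case (Suc k')
    then have "x k 0 = x k' (Suc (m - 1))" using outer_step m_pos by simp
    then show ?thesis using m_pos calculation[of "m - 1" k'] by simp
  qed (use start in simp)
  ultimately show ?thesis
    using assms by (cases i) auto
qed

lemma dir_bounded: "\<exists>D. \<forall>k. \<forall>i<m. norm (dir k i) \<le> D"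
proof -
  have "bounded X" using X(2) by (rule compact_imp_bounded)
  obtain Gf where Gf: "\<forall>i\<in>{..<m}. \<forall>z\<in>X. \<forall>v\<in>subdiff (fs i) z. norm v \<le> Gf"
    using family_subdiff_bounded[of "{..<m}" fs X] fs_convex \<open>bounded X\<close> by auto
  obtain Gh where Gh: "\<forall>z\<in>X. \<forall>v\<in>subdiff h z. norm v \<le> Gh"
    using convex_on_subdiff_bounded[OF h_convex \<open>bounded X\<close>] by auto
  obtain \<Lambda> where \<Lambda>: "\<And>k. lambda k \<le> \<Lambda>"
    using lambda_bounded by (auto simp: bdd_above_def)
  have "norm (dir k i) \<le> Gf + \<Lambda> * \<bar>Gh\<bar>" if "i < m" for k i
  proof -
    have "lambda k / real m \<le> lambda k"
      using m_pos lambda_pos[of k] by (simp add: divide_le_eq mult_le_cancel_left1)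
    then have "lambda k / real m \<le> \<Lambda>" using \<Lambda>[of k] by linarith
    have "x k i \<in> X" using that by (intro iterate_in_set) simp
    then have "norm (gh k i) \<le> Gh" "norm (gf k i) \<le> Gf"
      using Gh Gf gh[OF that] gf[OF that] that by auto
    then have "(lambda k / real m) * norm (gh k i) \<le> \<Lambda> * \<bar>Gh\<bar>"
      using lambda_pos[of k] \<Lambda>[of k] \<open>lambda k / real m \<le> \<Lambda>\<close> by (intro mult_mono) auto
    moreover have "norm ((lambda k / real m) *\<^sub>R gh k i) = (lambda k / real m) * norm (gh k i)"
      using lambda_pos[of k] by simp
    ultimately show ?thesis
      unfolding dir_def using norm_triangle_ineq[of "gf k i" "(lambda k / real m) *\<^sub>R gh k i"]
        \<open>norm (gf k i) \<le> Gf\<close> by linarith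
  qed
  then show ?thesis by blast
qed

lemma lipschitz_bounded: "\<exists>L. (\<forall>i<m. L-lipschitz_on X (fs i)) \<and> L-lipschitz_on X h"
proof -
  have "bounded X" using X(2) by (rule compact_imp_bounded)
  obtain Lf where Lf: "\<forall>i\<in>{..<m}. Lf-lipschitz_on X (fs i)"
    using family_lipschitz_on_bounded[of "{..<m}" fs X] fs_convex \<open>bounded X\<close> by auto
  obtain Lh where Lh: "Lh-lipschitz_on X h"
    using convex_on_lipschitz_on_bounded[OF h_convex \<open>bounded X\<close>] by auto
  have "\<forall>i<m. (max Lf Lh)-lipschitz_on X (fs i)"
    using Lf lipschitz_on_mono[OF _ order_refl max.cobounded1] by blast
  moreover have "(max Lf Lh)-lipschitz_on X h"
    using lipschitz_on_mono[OF Lh order_refl max.cobounded2] .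
  ultimately show ?thesis by blast
qed

lemma iterate_step_le:
  assumes "i < m"
  shows "norm (x k (Suc i) - x k i) \<le> gamma k * norm (dir k i)"
proof -
  have "x k i \<in> X" using assms by (intro iterate_in_set) simp
  then have "norm (x k (Suc i) - x k i) \<le> norm ((x k i - gamma k *\<^sub>R dir k i) - x k i)"
    using closest_point_lipschitz[OF X(3) X_closed X(1), of "x k i - gamma k *\<^sub>R dir k i" "x k i"]
    by (simp add: inner_step[OF assms] dir_def closest_point_self dist_norm)
  then show ?thesis using gamma_pos[of k] by simp
qed

lemma iterate_drift_le:
  assumes D: "\<And>i. i < m \<Longrightarrow> norm (dir k i) \<le> D" and "j \<le> m"
  shows "norm (x k j - x k 0) \<le> real j * gamma k * D"
  using \<open>j \<le> m\<close>
proof (induction j)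
  case (Suc j)
  have "norm (x k (Suc j) - x k 0) \<le> norm (x k (Suc j) - x k j) + norm (x k j - x k 0)"
    using norm_triangle_ineq[of "x k (Suc j) - x k j" "x k j - x k 0"] by simp
  also have "norm (x k (Suc j) - x k j) \<le> gamma k * D"
    using iterate_step_le[of j k] D[of j] gamma_pos[of k] Suc.prems
    by (meson Suc_le_lessD mult_left_mono order_trans less_imp_le)
  finally show ?case using Suc by (simp add: algebra_simps)
qed simp

lemma inner_descent:
  assumes "j < m" "y \<in> X"
  shows "(norm (x k (Suc j) - y))\<^sup>2 \<le> (norm (x k j - y))\<^sup>2
    - 2 * gamma k * (fs j (x k j) - fs j y + (lambda k / real m) * (h (x k j) - h y))
    + (gamma k)\<^sup>2 * (norm (dir k j))\<^sup>2"
proof -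
  have "fs j (x k j) - fs j y \<le> inner (gf k j) (x k j - y)"
    using gf[OF assms(1)] by (rule subdiff_diff_le_inner)
  moreover have "(lambda k / real m) * (h (x k j) - h y) \<le> (lambda k / real m) * inner (gh k j) (x k j - y)"
    using subdiff_diff_le_inner[OF gh[OF assms(1)]] lambda_pos[of k] by (intro mult_left_mono) auto
  ultimately have "fs j (x k j) - fs j y + (lambda k / real m) * (h (x k j) - h y) \<le> inner (dir k j) (x k j - y)"
    by (simp add: dir_def inner_add_left)
  then show ?thesis
    unfolding inner_step[OF assms(1)] dir_def[symmetric]
    using gamma_pos[of k] by (intro closest_point_subgradient_step X X_closed assms(2)) auto
qed

lemma cycle_values_shift_le:
  assumes D: "\<And>i. i < m \<Longrightarrow> norm (dir k i) \<le> D"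
    and L: "\<forall>i<m. L-lipschitz_on X (fs i)" "L-lipschitz_on X h"
    and \<Lambda>: "lambda k \<le> \<Lambda>" and j: "j < m"
  shows "fs j (x k 0) + (lambda k / real m) * h (x k 0)
    \<le> fs j (x k j) + (lambda k / real m) * h (x k j) + L * (real m * gamma k * D) * (1 + \<Lambda>)"
proof -
  let ?c = "lambda k / real m" and ?P = "L * (real m * gamma k * D)"
  have xj: "x k j \<in> X" and x0: "x k 0 \<in> X" using j by (auto intro: iterate_in_set)
  have "0 \<le> D" using D[OF j] norm_ge_zero[of "dir k j"] by linarith
  have "0 \<le> L" using L(2) by (rule lipschitz_on_nonneg)
  have "?c \<le> lambda k" using m_pos lambda_pos[of k] by (simp add: divide_le_eq mult_le_cancel_left1)
  then have c: "0 \<le> ?c" "?c \<le> \<Lambda>" using lambda_pos[of k] \<Lambda> by auto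
  have "real j * gamma k * D \<le> real m * gamma k * D"
    using j gamma_pos[of k] \<open>0 \<le> D\<close> by (intro mult_right_mono) auto
  then have "norm (x k 0 - x k j) \<le> real m * gamma k * D"
    using iterate_drift_le[OF D, of j] j by (simp add: norm_minus_commute)
  then have shift: "L * norm (x k 0 - x k j) \<le> ?P" using \<open>0 \<le> L\<close> by (rule mult_left_mono)
  have "fs j (x k 0) - fs j (x k j) \<le> ?P"
    using lipschitz_on_normD[OF L(1)[rule_format, OF j] x0 xj] shift by simp
  moreover have "h (x k 0) - h (x k j) \<le> ?P"
    using lipschitz_on_normD[OF L(2) x0 xj] shift by simp
  then have "?c * (h (x k 0) - h (x k j)) \<le> ?c * ?P" using c(1) by (rule mult_left_mono)
  moreover have "?c * ?P \<le> \<Lambda> * ?P"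
    using c(2) \<open>0 \<le> L\<close> \<open>0 \<le> D\<close> gamma_pos[of k] by (intro mult_right_mono) auto
  moreover have "?c * (h (x k 0) - h (x k j)) = ?c * h (x k 0) - ?c * h (x k j)"
    "?P * (1 + \<Lambda>) = ?P + \<Lambda> * ?P"
    by (simp_all add: algebra_simps)
  ultimately show ?thesis by linarith
qed

lemma inner_descent_from_start:
  assumes D: "\<And>i. i < m \<Longrightarrow> norm (dir k i) \<le> D"
    and L: "\<forall>i<m. L-lipschitz_on X (fs i)" "L-lipschitz_on X h"
    and \<Lambda>: "lambda k \<le> \<Lambda>"
    and j: "j < m" and y: "y \<in> X"
  shows "(norm (x k (Suc j) - y))\<^sup>2 \<le> (norm (x k j - y))\<^sup>2
    - 2 * gamma k * (fs j (x k 0) - fs j y) - 2 * gamma k * (lambda k / real m) * (h (x k 0) - h y)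
    + (gamma k)\<^sup>2 * (D\<^sup>2 + 2 * L * real m * D * (1 + \<Lambda>))"
proof -
  let ?c = "lambda k / real m" and ?P = "L * (real m * gamma k * D) * (1 + \<Lambda>)"
  let ?A = "fs j (x k 0) - fs j y" and ?H = "h (x k 0) - h y"
  let ?A' = "fs j (x k j) - fs j y" and ?H' = "h (x k j) - h y"
  have "?A + ?c * ?H - ?P \<le> ?A' + ?c * ?H'"
    using cycle_values_shift_le[OF D L \<Lambda> j] by (simp add: algebra_simps)
  then have "2 * gamma k * (?A + ?c * ?H - ?P) \<le> 2 * gamma k * (?A' + ?c * ?H')"
    using gamma_pos[of k] by (intro mult_left_mono) auto
  moreover have expand: "2 * gamma k * (a + c * b - ?P)
      = 2 * gamma k * a + 2 * gamma k * c * b - (gamma k)\<^sup>2 * (2 * L * real m * D * (1 + \<Lambda>))" for a b c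
    by (simp add: power2_eq_square algebra_simps)
  moreover have "(gamma k)\<^sup>2 * (norm (dir k j))\<^sup>2 \<le> (gamma k)\<^sup>2 * D\<^sup>2"
    using D[OF j] by (intro mult_left_mono power_mono) auto
  moreover have "(gamma k)\<^sup>2 * (D\<^sup>2 + 2 * L * real m * D * (1 + \<Lambda>))
      = (gamma k)\<^sup>2 * D\<^sup>2 + (gamma k)\<^sup>2 * (2 * L * real m * D * (1 + \<Lambda>))"
    by (simp add: algebra_simps)
  ultimately show ?thesis using inner_descent[OF j y, of k] expand[of ?A ?c ?H] by linarith
qed

lemma inner_loop_descent:
  assumes D: "\<And>i. i < m \<Longrightarrow> norm (dir k i) \<le> D"
    and L: "\<forall>i<m. L-lipschitz_on X (fs i)" "L-lipschitz_on X h"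
    and \<Lambda>: "lambda k \<le> \<Lambda>"
    and j: "j \<le> m" and y: "y \<in> X"
  shows "(norm (x k j - y))\<^sup>2 \<le> (norm (x k 0 - y))\<^sup>2
    - 2 * gamma k * (\<Sum>i<j. fs i (x k 0) - fs i y) - 2 * gamma k * (real j * lambda k / real m) * (h (x k 0) - h y)
    + real j * (gamma k)\<^sup>2 * (D\<^sup>2 + 2 * L * real m * D * (1 + \<Lambda>))"
  using j
proof (induction j)
  case (Suc j)
  let ?Q = "D\<^sup>2 + 2 * L * real m * D * (1 + \<Lambda>)" and ?H = "h (x k 0) - h y"
  have "2 * gamma k * (\<Sum>i<Suc j. fs i (x k 0) - fs i y)
      = 2 * gamma k * (\<Sum>i<j. fs i (x k 0) - fs i y) + 2 * gamma k * (fs j (x k 0) - fs j y)"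
    by (simp add: algebra_simps)
  moreover have "2 * gamma k * (real (Suc j) * lambda k / real m) * ?H
      = 2 * gamma k * (real j * lambda k / real m) * ?H + 2 * gamma k * (lambda k / real m) * ?H"
    by (simp add: algebra_simps add_divide_distrib)
  moreover have "real (Suc j) * (gamma k)\<^sup>2 * ?Q = real j * (gamma k)\<^sup>2 * ?Q + (gamma k)\<^sup>2 * ?Q"
    by (simp add: algebra_simps)
  ultimately show ?case
    using Suc inner_descent_from_start[OF D L \<Lambda> _ y, of j] by simp
qed simp

lemma outer_descent:
  "\<exists>C\<ge>0. \<forall>k. \<forall>y\<in>X. (norm (x (Suc k) 0 - y))\<^sup>2 \<le> (norm (x k 0 - y))\<^sup>2
    - 2 * gamma k * (obj (x k 0) - obj y) - 2 * gamma k * lambda k * (h (x k 0) - h y) + C * (gamma k)\<^sup>2"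
proof -
  obtain D where D: "\<And>k i. i < m \<Longrightarrow> norm (dir k i) \<le> D" using dir_bounded by blast
  obtain L where L: "\<forall>i<m. L-lipschitz_on X (fs i)" "L-lipschitz_on X h" using lipschitz_bounded by blast
  obtain \<Lambda> where \<Lambda>: "\<And>k. lambda k \<le> \<Lambda>" using lambda_bounded by (auto simp: bdd_above_def)
  define C where "C = real m * (D\<^sup>2 + 2 * L * real m * D * (1 + \<Lambda>))"
  have "0 \<le> D" using D[of 0 0] m_pos norm_ge_zero[of "dir 0 0"] by linarith
  moreover have "0 \<le> L" using L(2) by (rule lipschitz_on_nonneg)
  moreover have "0 \<le> \<Lambda>" using \<Lambda>[of 0] lambda_pos[of 0] by linarith
  ultimately have "C \<ge> 0" by (simp add: C_def)
  moreover have "(norm (x (Suc k) 0 - y))\<^sup>2 \<le> (norm (x k 0 - y))\<^sup>2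
      - 2 * gamma k * (obj (x k 0) - obj y) - 2 * gamma k * lambda k * (h (x k 0) - h y) + C * (gamma k)\<^sup>2"
    if "y \<in> X" for k y
  proof -
    have "(\<Sum>i<m. fs i (x k 0) - fs i y) = obj (x k 0) - obj y" by (simp add: obj_def sum_subtractf)
    moreover have "real m * lambda k / real m = lambda k" using m_pos by simp
    moreover have "real m * (gamma k)\<^sup>2 * (D\<^sup>2 + 2 * L * real m * D * (1 + \<Lambda>)) = C * (gamma k)\<^sup>2"
      by (simp add: C_def)
    ultimately show ?thesis
      using inner_loop_descent[OF D L \<Lambda> order_refl that, of k] by (simp only: outer_step)
  qed
  ultimately show ?thesis by blast
qed

end

section \<open>Polynomially decaying step sizes\<close>

locale power_stepsizes =
  fixes gamma0 lambda0 a b r :: real and gamma lambda :: "nat \<Rightarrow> real"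
  assumes gamma0_pos: "gamma0 > 0" and lambda0_pos: "lambda0 > 0"
    and exps: "0 < b" "b < a" "a + b < 1" and r: "r < 1"
    and gamma_eq: "\<And>k. gamma k = gamma0 * (real k + 1) powr -a"
    and lambda_eq: "\<And>k. lambda k = lambda0 * (real k + 1) powr -b"
begin

lemma gamma_pos: "gamma k > 0"
  using gamma0_pos by (simp add: gamma_eq)

lemma lambda_pos: "lambda k > 0"
  using lambda0_pos by (simp add: lambda_eq)

lemma lambda_bounded: "bdd_above (range lambda)"
proof (rule bdd_aboveI2)
  show "lambda k \<le> lambda0" for k
    using lambda0_pos exps by (simp add: lambda_eq powr_minus_divide divide_le_eq ge_one_powr_ge_zero)
qed

lemma gamma_le_lambda: "gamma k \<le> gamma0 / lambda0 * lambda k"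
proof -
  have "(real k + 1) powr -a \<le> (real k + 1) powr -b" using exps by (intro powr_mono) auto
  then show ?thesis using gamma0_pos lambda0_pos by (simp add: gamma_eq lambda_eq)
qed

lemma gamma_powr: "gamma k powr p = gamma0 powr p * (real k + 1) powr (- a * p)"
  using gamma0_pos by (simp add: gamma_eq powr_mult powr_powr)

lemma gamma_powr_split: "gamma k powr r = gamma k powr (r - 1) * gamma k"
  using gamma_pos[of k] powr_add[of "gamma k" "r - 1" 1] by simp

lemma objective_step_le:
  assumes descent: "2 * gamma k * F + 2 * gamma k * lambda k * H \<le> E - E' + C * (gamma k)\<^sup>2"
    and "- H0 \<le> H" "0 \<le> C"
  shows "gamma k powr r * F \<le> gamma0 powr (r - 1) / 2 * (real k + 1) powr (a * (1 - r)) * (E - E')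
    + (H0 + C * gamma0 / (2 * lambda0)) * gamma0 powr r * lambda0 * (real k + 1) powr ((1 - a * r - b) - 1)"
proof -
  define K1 where "K1 = H0 + C * gamma0 / (2 * lambda0)"
  have "gamma k * F \<le> (E - E') / 2 + gamma k * lambda k * H0 + C / 2 * (gamma k)\<^sup>2"
    using descent mult_left_mono[OF assms(2), of "gamma k * lambda k"] gamma_pos[of k] lambda_pos[of k]
    by (simp add: field_simps)
  also have "C / 2 * (gamma k)\<^sup>2 \<le> C / 2 * (gamma k * (gamma0 / lambda0 * lambda k))"
    using gamma_le_lambda[of k] gamma_pos[of k] assms(3) unfolding power2_eq_square
    by (intro mult_left_mono) auto
  finally have "gamma k * F \<le> (E - E') / 2 + K1 * (gamma k * lambda k)"
    using lambda0_pos by (simp add: K1_def field_simps)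
  then have "gamma k powr r * F \<le> gamma k powr (r - 1) * ((E - E') / 2 + K1 * (gamma k * lambda k))"
    unfolding gamma_powr_split mult.assoc by (rule mult_left_mono) simp
  also have "\<dots> = gamma k powr (r - 1) / 2 * (E - E') + K1 * (gamma k powr r * lambda k)"
    by (simp add: gamma_powr_split algebra_simps)
  also have "gamma k powr r * lambda k = gamma0 powr r * lambda0 * (real k + 1) powr ((1 - a * r - b) - 1)"
    by (simp add: gamma_powr lambda_eq powr_add[symmetric])
  also have "gamma k powr (r - 1) = gamma0 powr (r - 1) * (real k + 1) powr (a * (1 - r))"
    by (simp add: gamma_powr algebra_simps)
  finally show ?thesis by (simp add: K1_def mult.assoc)
qed

lemma objective_rate:
  fixes F H E :: "nat \<Rightarrow> real"
  assumes descent: "\<And>k. 2 * gamma k * F k + 2 * gamma k * lambda k * H k \<le> E k - E (Suc k) + C * (gamma k)\<^sup>2"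
    and H: "\<And>k. - H0 \<le> H k" "0 \<le> H0" and C: "0 \<le> C"
    and E: "\<And>k. 0 \<le> E k" "\<And>k. E k \<le> R"
  shows "\<exists>K. \<forall>N\<ge>1. (\<Sum>k<N. gamma k powr r * F k) / (\<Sum>k<N. gamma k powr r) \<le> K * real N powr -b"
proof (rule weighted_average_powr_rate[OF _ _ _ _ _ _ _ objective_step_le[OF descent H(1) C] E])
  show "gamma k powr r = gamma0 powr r * (real k + 1) powr ((1 - a * r) - 1)" for k
    by (simp add: gamma_powr)
  have "a * r < a" using exps r by (simp add: mult_less_cancel_left1)
  then show "0 < 1 - a * r" "0 < 1 - a * r - b"
    using exps by linarith+
  show "0 < gamma0 powr r" "0 \<le> gamma0 powr (r - 1) / 2" "0 \<le> a * (1 - r)"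
    "0 \<le> (H0 + C * gamma0 / (2 * lambda0)) * gamma0 powr r * lambda0"
    using gamma0_pos lambda0_pos exps r H(2) C by auto
  show "a * (1 - r) - (1 - a * r) \<le> - b" "1 - a * r - b - (1 - a * r) \<le> - b"
    using exps by (auto simp: algebra_simps)
qed

lemma regularizer_step_le:
  assumes descent: "2 * gamma k * F + 2 * gamma k * lambda k * H \<le> E - E' + C * (gamma k)\<^sup>2"
    and "0 \<le> F" "0 \<le> C" "\<rho> \<le> a - b"
  shows "gamma k powr r * H \<le> gamma0 powr (r - 1) / (2 * lambda0) * (real k + 1) powr (- a * (r - 1) - - b)
    * (E - E') + C / 2 * (gamma0 powr r * gamma0 / lambda0) * (real k + 1) powr ((1 - a * r - \<rho>) - 1)"
proof -
  let ?t = "real k + 1"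
  define c where "c = gamma k powr (r - 1) / (2 * lambda k)"
  have "0 \<le> c" using lambda_pos[of k] by (simp add: c_def)
  have "gamma k powr r * gamma k / lambda k
      = gamma0 powr r * gamma0 / lambda0 * (?t powr (- a * r) * ?t powr - a / ?t powr - b)"
    unfolding gamma_powr by (simp add: gamma_eq lambda_eq)
  also have "?t powr (- a * r) * ?t powr - a / ?t powr - b = ?t powr (- a * r + - a - - b)"
    unfolding powr_diff powr_add ..
  also have "gamma0 powr r * gamma0 / lambda0 * \<dots> \<le> gamma0 powr r * gamma0 / lambda0 * ?t powr ((1 - a * r - \<rho>) - 1)"
    using assms(4) gamma0_pos lambda0_pos by (intro mult_left_mono powr_mono) auto
  finally have bound: "C / 2 * (gamma k powr r * gamma k / lambda k)
      \<le> C / 2 * (gamma0 powr r * gamma0 / lambda0) * ?t powr ((1 - a * r - \<rho>) - 1)"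
    using assms(3) unfolding mult.assoc by (intro mult_left_mono) auto
  have "c = gamma0 powr (r - 1) / (2 * lambda0) * (?t powr (- a * (r - 1)) / ?t powr - b)"
    unfolding c_def gamma_powr by (simp add: lambda_eq)
  also have "?t powr (- a * (r - 1)) / ?t powr - b = ?t powr (- a * (r - 1) - - b)"
    unfolding powr_diff ..
  finally have c_eq: "c = gamma0 powr (r - 1) / (2 * lambda0) * ?t powr (- a * (r - 1) - - b)" .
  have "gamma k powr r * H = c * (2 * gamma k * lambda k * H)"
    using lambda_pos[of k] by (simp add: c_def gamma_powr_split)
  also have "\<dots> \<le> c * (E - E' + C * (gamma k)\<^sup>2)"
    using descent assms(2) gamma_pos[of k] \<open>0 \<le> c\<close>
    by (intro mult_left_mono) (auto intro: order_trans[rotated])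
  also have "\<dots> = c * (E - E') + C / 2 * (gamma k powr r * gamma k / lambda k)"
    using lambda_pos[of k] by (simp add: c_def gamma_powr_split power2_eq_square field_simps)
  finally show ?thesis using bound unfolding c_eq by linarith
qed

lemma regularizer_rate:
  fixes F H E :: "nat \<Rightarrow> real"
  assumes descent: "\<And>k. 2 * gamma k * F k + 2 * gamma k * lambda k * H k \<le> E k - E (Suc k) + C * (gamma k)\<^sup>2"
    and F: "\<And>k. 0 \<le> F k" and C: "0 \<le> C"
    and E: "\<And>k. 0 \<le> E k" "\<And>k. E k \<le> R"
  shows "\<exists>\<rho>>0. \<exists>K. \<forall>N\<ge>1. (\<Sum>k<N. gamma k powr r * H k) / (\<Sum>k<N. gamma k powr r) \<le> K * real N powr -\<rho>"
proof -
  have "a * r < a" using exps r by (simp add: mult_less_cancel_left1)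
  then have "0 < 1 - a * r" using exps by linarith
  \<comment> \<open>rho \<le> a - b lets (k+1) powr -rho dominate gamma k / lambda k; the other two bounds keep the
    telescoping term and the error sum of lower order than the weight sum\<close>
  define \<rho> where "\<rho> = min (a - b) (min (1 - a - b) ((1 - a * r) / 2))"
  have \<rho>: "0 < \<rho>" "\<rho> \<le> a - b" "\<rho> \<le> 1 - a - b" "\<rho> < 1 - a * r"
    using exps \<open>0 < 1 - a * r\<close> by (auto simp: \<rho>_def min_def)
  have "\<exists>K. \<forall>N\<ge>1. (\<Sum>k<N. gamma k powr r * H k) / (\<Sum>k<N. gamma k powr r) \<le> K * real N powr -\<rho>"
  proof (rule weighted_average_powr_rate[OF _ _ _ _ _ _ _ regularizer_step_le[OF descent F C \<rho>(2)] E])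
    show "gamma k powr r = gamma0 powr r * (real k + 1) powr ((1 - a * r) - 1)" for k
      by (simp add: gamma_powr)
    show "0 < 1 - a * r" "0 < 1 - a * r - \<rho>" using \<rho>(4) \<open>0 < 1 - a * r\<close> by linarith+
    have "- a * (r - 1) - - b = a - a * r + b" by (simp add: algebra_simps)
    then show "0 \<le> - a * (r - 1) - - b" using \<open>a * r < a\<close> exps by linarith
    show "0 < gamma0 powr r" "0 \<le> gamma0 powr (r - 1) / (2 * lambda0)"
      "0 \<le> C / 2 * (gamma0 powr r * gamma0 / lambda0)"
      using gamma0_pos lambda0_pos C by auto
    show "- a * (r - 1) - - b - (1 - a * r) \<le> - \<rho>" "1 - a * r - \<rho> - (1 - a * r) \<le> - \<rho>"
      using \<rho>(3) by (auto simp: algebra_simps)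
  qed
  then show ?thesis using \<rho>(1) by blast
qed

end

locale ir_ig_power = ir_ig + power_stepsizes
begin

definition avg :: "nat \<Rightarrow> 'a" where
  "avg N = (\<Sum>k<N. gamma k powr r *\<^sub>R x k 0) /\<^sub>R (\<Sum>k<N. gamma k powr r)"

lemma weight_pos: "gamma k powr r > 0"
  using gamma_pos[of k] by simp

lemma avg_in_set:
  assumes "N \<ge> 1"
  shows "avg N \<in> X"
proof -
  have "0 \<in> {..<N}" using assms by simp
  then show ?thesis
    unfolding avg_def using weight_pos
    by (intro convex_weighted_mean_mem X(3)) (auto intro: iterate_in_set)
qed

lemma avg_excess_le:
  assumes "convex_on UNIV g" "N \<ge> 1"
  shows "g (avg N) - c \<le> (\<Sum>k<N. gamma k powr r * (g (x k 0) - c)) / (\<Sum>k<N. gamma k powr r)"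
proof -
  have "0 \<in> {..<N}" using assms(2) by simp
  then have ne: "{..<N} \<noteq> {}" by blast
  then have "(\<Sum>k<N. gamma k powr r) > 0" using weight_pos by (intro sum_pos) auto
  moreover have "g (avg N) \<le> (\<Sum>k<N. gamma k powr r * g (x k 0)) / (\<Sum>k<N. gamma k powr r)"
    unfolding avg_def using assms(1) ne weight_pos by (intro convex_on_weighted_mean_le) auto
  ultimately show ?thesis
    by (simp add: right_diff_distrib sum_subtractf diff_divide_distrib flip: sum_distrib_right)
qed

lemma distance_descent:
  assumes "y \<in> X"
  shows "\<exists>C R. 0 \<le> C \<and> (\<forall>k. (norm (x k 0 - y))\<^sup>2 \<le> R) \<and>
    (\<forall>k. 2 * gamma k * (obj (x k 0) - obj y) + 2 * gamma k * lambda k * (h (x k 0) - h y)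
        \<le> (norm (x k 0 - y))\<^sup>2 - (norm (x (Suc k) 0 - y))\<^sup>2 + C * (gamma k)\<^sup>2)"
proof -
  obtain C where "0 \<le> C" and C: "\<And>k. (norm (x (Suc k) 0 - y))\<^sup>2 \<le> (norm (x k 0 - y))\<^sup>2
      - 2 * gamma k * (obj (x k 0) - obj y) - 2 * gamma k * lambda k * (h (x k 0) - h y) + C * (gamma k)\<^sup>2"
    using outer_descent assms by blast
  obtain B where B: "\<And>z. z \<in> X \<Longrightarrow> norm z \<le> B"
    using compact_imp_bounded[OF X(2)] unfolding bounded_iff by blast
  have "(norm (x k 0 - y))\<^sup>2 \<le> (2 * B)\<^sup>2" for k
  proof -
    have "norm (x k 0 - y) \<le> norm (x k 0) + norm y" by (rule norm_triangle_ineq4)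
    also have "\<dots> \<le> 2 * B" using B[OF assms] B[of "x k 0"] iterate_in_set[of 0 k] by simp
    finally show ?thesis by (intro power_mono) auto
  qed
  with \<open>0 \<le> C\<close> C show ?thesis by (intro exI[of _ C] exI[of _ "(2 * B)\<^sup>2"]) (auto simp: algebra_simps)
qed

lemma avg_objective_rate:
  assumes "y \<in> X"
  shows "\<exists>K. \<forall>N\<ge>1. obj (avg N) - obj y \<le> K * real N powr -b"
proof -
  obtain C R where C: "0 \<le> C" and R: "\<And>k. (norm (x k 0 - y))\<^sup>2 \<le> R"
    and descent: "\<And>k. 2 * gamma k * (obj (x k 0) - obj y) + 2 * gamma k * lambda k * (h (x k 0) - h y)
        \<le> (norm (x k 0 - y))\<^sup>2 - (norm (x (Suc k) 0 - y))\<^sup>2 + C * (gamma k)\<^sup>2"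
    using distance_descent[OF assms] by blast
  obtain M where M: "\<forall>z\<in>X. \<bar>h z\<bar> \<le> M"
    using convex_on_abs_bounded[OF h_convex compact_imp_bounded[OF X(2)]] by blast
  have hx: "\<bar>h (x k 0)\<bar> \<le> M" for k using M iterate_in_set[of 0 k] by auto
  have hy: "\<bar>h y\<bar> \<le> M" using M assms by auto
  have "- (2 * M) \<le> h (x k 0) - h y" "0 \<le> 2 * M" for k
    using hx[of k] hy by (auto simp: abs_le_iff)
  then obtain K where "\<forall>N\<ge>1. (\<Sum>k<N. gamma k powr r * (obj (x k 0) - obj y)) / (\<Sum>k<N. gamma k powr r)
      \<le> K * real N powr -b"
    using objective_rate[OF descent _ _ C zero_le_power2 R] by blast
  then show ?thesis
    using avg_excess_le[OF obj_convex] by (meson order_trans)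
qed

lemma avg_regularizer_rate:
  assumes "y \<in> X" "\<And>z. z \<in> X \<Longrightarrow> obj y \<le> obj z"
  shows "\<exists>\<rho>>0. \<exists>K. \<forall>N\<ge>1. h (avg N) - h y \<le> K * real N powr -\<rho>"
proof -
  obtain C R where C: "0 \<le> C" and R: "\<And>k. (norm (x k 0 - y))\<^sup>2 \<le> R"
    and descent: "\<And>k. 2 * gamma k * (obj (x k 0) - obj y) + 2 * gamma k * lambda k * (h (x k 0) - h y)
        \<le> (norm (x k 0 - y))\<^sup>2 - (norm (x (Suc k) 0 - y))\<^sup>2 + C * (gamma k)\<^sup>2"
    using distance_descent[OF assms(1)] by blast
  have "0 \<le> obj (x k 0) - obj y" for k using assms(2) iterate_in_set[of 0 k] by simp
  from regularizer_rate[OF descent this C zero_le_power2 R]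
  obtain \<rho> K where "\<rho> > 0" "\<forall>N\<ge>1. (\<Sum>k<N. gamma k powr r * (h (x k 0) - h y)) / (\<Sum>k<N. gamma k powr r)
      \<le> K * real N powr -\<rho>"
    by blast
  then show ?thesis
    using avg_excess_le[OF h_convex] by (meson order_trans)
qed

lemma avg_tendsto:
  assumes "strongly_convex h mu" "mu > 0" "bilevel_minimizer X obj h xh"
  shows "avg \<longlonglongrightarrow> xh"
proof (rule tendsto_bilevel_minimizer[OF X(2) _ _ assms(1,2) _ assms(3)])
  show "convex_on X obj" using convex_on_subset[OF obj_convex subset_UNIV X(3)] .
  show "continuous_on X obj" "continuous_on X h"
    using convex_on_continuous[OF open_UNIV obj_convex] convex_on_continuous[OF open_UNIV h_convex]
    by (auto intro: continuous_on_subset)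
  show "eventually (\<lambda>N. avg N \<in> X) sequentially"
    using eventually_ge_at_top[of 1] by eventually_elim (rule avg_in_set)
  have xh: "xh \<in> X" "\<And>z. z \<in> X \<Longrightarrow> obj xh \<le> obj z"
    using assms(3) by (auto simp: bilevel_minimizer_def)
  obtain K where K: "\<And>N. N \<ge> 1 \<Longrightarrow> obj (avg N) - obj xh \<le> K * real N powr -b"
    using avg_objective_rate[OF xh(1)] by blast
  obtain \<rho> K' where "\<rho> > 0" and K': "\<And>N. N \<ge> 1 \<Longrightarrow> h (avg N) - h xh \<le> K' * real N powr -\<rho>"
    using avg_regularizer_rate[OF xh] by blast
  fix \<delta> :: real
  assume "\<delta> > 0"
  show "eventually (\<lambda>N. obj (avg N) \<le> obj xh + \<delta> \<and> h (avg N) \<le> h xh + \<delta>) sequentially"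
    using eventually_ge_at_top[of 1] eventually_mult_powr_less[OF exps(1) \<open>\<delta> > 0\<close>, of K]
      eventually_mult_powr_less[OF \<open>\<rho> > 0\<close> \<open>\<delta> > 0\<close>, of K']
    by eventually_elim (use K K' in force)
qed

lemma avg_objective_bigo:
  assumes "y \<in> X" "\<And>z. z \<in> X \<Longrightarrow> obj y \<le> obj z"
  shows "(\<lambda>N. obj (avg N) - obj y) \<in> O(\<lambda>N. real N powr -b)"
proof -
  obtain K where K: "\<And>N. N \<ge> 1 \<Longrightarrow> obj (avg N) - obj y \<le> K * real N powr -b"
    using avg_objective_rate[OF assms(1)] by blast
  show ?thesis
  proof (rule bigoI[of _ K])
    show "eventually (\<lambda>N. norm (obj (avg N) - obj y) \<le> K * norm (real N powr -b)) sequentially"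
      using eventually_ge_at_top[of 1]
      by eventually_elim (use K assms(2) avg_in_set in force)
  qed
qed

end

theorem theorem2:
  fixes X :: "'n::euclidean_space set"
    and fs :: "nat \<Rightarrow> 'n \<Rightarrow> real" and h :: "'n \<Rightarrow> real"
    and m :: nat and mu_h eps r gamma0 lambda0 :: real
    and gamma lambda :: "nat \<Rightarrow> real"
    and x0 xh :: 'n
    and x :: "nat \<Rightarrow> nat \<Rightarrow> 'n"
    and gf gh :: "nat \<Rightarrow> nat \<Rightarrow> 'n"
  defines "f \<equiv> (\<lambda>y. \<Sum>i<m. fs i y)"
  defines "fstar \<equiv> (INF y\<in>X. f y)"
  defines "Xstar \<equiv> {y \<in> X. f y = fstar}"
  defines "xbar \<equiv> (\<lambda>N. (\<Sum>k<N. gamma k powr r *\<^sub>R x k 0) /\<^sub>R (\<Sum>k<N. gamma k powr r))"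
  assumes X: "X \<noteq> {}" "compact X" "convex X"
    and m: "m \<ge> 1"
    and fs_convex: "\<And>i. i < m \<Longrightarrow> convex_on UNIV (fs i)"
    and mu_h: "mu_h > 0" and h_sc: "strongly_convex h mu_h"
    and xh: "xh \<in> Xstar" "\<And>y. y \<in> Xstar \<Longrightarrow> h xh \<le> h y"
    and eps: "0 < eps" "eps < 0.5" and r: "r < 1"
    and gamma0: "gamma0 > 0" and lambda0: "lambda0 > 0"
    and step: "gamma0 * lambda0 * mu_h \<le> 2 * real m"
    and gamma_def: "\<And>k. gamma k = gamma0 / (real k + 1) powr (0.5 + 0.5 * eps)"
    and lambda_def: "\<And>k. lambda k = lambda0 / (real k + 1) powr (0.5 - eps)"
    and x0: "x0 \<in> X" "x 0 0 = x0"
    and gf: "\<And>k i. i < m \<Longrightarrow> gf k i \<in> subdiff (fs i) (x k i)"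
    and gh: "\<And>k i. i < m \<Longrightarrow> gh k i \<in> subdiff h (x k i)"
    and inner_step: "\<And>k i. i < m \<Longrightarrow>
        x k (Suc i) = closest_point X (x k i - gamma k *\<^sub>R (gf k i + (lambda k / real m) *\<^sub>R gh k i))"
    and outer_step: "\<And>k. x (Suc k) 0 = x k m"
  shows "xbar \<longlonglongrightarrow> xh \<and>
         (\<lambda>N. f (xbar N) - fstar) \<in> O(\<lambda>N. 1 / real N powr (0.5 - eps))"
proof -
  have "gamma k = gamma0 * (real k + 1) powr -(0.5 + 0.5 * eps)"
    and "lambda k = lambda0 * (real k + 1) powr -(0.5 - eps)" for k
    unfolding gamma_def lambda_def powr_minus_divide by simp_all
  then interpret steps: power_stepsizes gamma0 lambda0 "0.5 + 0.5 * eps" "0.5 - eps" r gamma lambda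
    using gamma0 lambda0 eps r by unfold_locales auto
  interpret ir_ig_power X fs h m gamma lambda x gf gh gamma0 lambda0 "0.5 + 0.5 * eps" "0.5 - eps" r
  proof unfold_locales
    show "convex_on UNIV h" using h_sc mu_h by (intro strongly_convex_imp_convex_on) auto
  qed (use X m fs_convex steps.gamma_pos steps.lambda_pos steps.lambda_bounded x0 gf gh inner_step outer_step in auto)
  have "obj = f" by (simp add: obj_def f_def fun_eq_iff)
  moreover have "xbar = avg" by (simp add: xbar_def avg_def fun_eq_iff)
  moreover have "bilevel_minimizer X f h xh"
    using xh X(2) convex_on_continuous[OF open_UNIV obj_convex] unfolding Xstar_def fstar_def
    by (intro bilevel_minimizer_INF) (auto simp: \<open>obj = f\<close> intro: continuous_on_subset)
  moreover have "fstar = f xh" using xh(1) by (simp add: Xstar_def)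
  moreover have "(\<lambda>N. 1 / real N powr (0.5 - eps)) = (\<lambda>N. real N powr -(0.5 - eps))"
    unfolding powr_minus_divide ..
  ultimately show ?thesis
    using avg_tendsto[OF h_sc mu_h] avg_objective_bigo unfolding bilevel_minimizer_def by auto
qed

end
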